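(* Every partition $F\subseteq S^d$ that is a $k$-neighborly family for some $k\leqslant 2$ is a total lamination.
   Context: Let $S=\{0,1,\ast\}$ and let $S^d$ be the set of strings of length $d$ over $S$; the symbol $\ast$ is called a joker, and $j(x)$ denotes the number of jokers in $x\in S^d$. For $x,y\in S^d$, $d(x,y)$ is the number of positions $i\in[d]$ such that one of $x_i,y_i$ equals $0$ and the other equals $1$. A family $F\subseteq S^d$ is $k$-neighborly if $1\leqslant d(x,y)\leqslant k$ for all distinct $x,y\in F$. A $k$-neighborly family $F$ is a partition if $\sum_{x\in F}2^{j(x)}=2^d$. For $s\in S$ and $i\in[d]$, $F^{i,s}$ denotes the set of strings in $F$ having symbol $s$ at position $i$. A family $F\subseteq S^d$ is a lamination if it is a partition and $F=F^{i,0}\cup F^{i,1}$ for some $i\in[d]$. For $v\in S^d$ and $i\in[d]$, $v_{-i}$ is the string of length $d-1$ obtained by deleting the $i$-th letter of $v$, and $F_{-i}=\{v_{-i}:v\in F\}$. Total laminations are defined recursively on $d$: for every $d\geqslant 1$, the one-element family $\{\ast\ast\cdots\ast\}\subseteq S^d$ and the full cube $\{0,1\}^d\subseteq S^d$ are total laminations; and a lamination $F\subseteq S^d$ is a total lamination if there is $i\in[d]$ with $F=F^{i,0}\cup F^{i,1}$ such that both $(F^{i,0})_{-i}$ and $(F^{i,1})_{-i}$ are total laminations (in $S^{d-1}$). *)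

theory Defs
  imports Main
begin

text \<open>Alphabet S = {0,1,*}; strings of length d are lists of length d.
  Positions are 0-based: i < d corresponds to i+1 in [d].\<close>

datatype sym = Zero | One | Joker

definition strings :: "nat \<Rightarrow> sym list set" where
  "strings d = {x. length x = d}"

definition jokers :: "sym list \<Rightarrow> nat" where
  "jokers x = length (filter (\<lambda>s. s = Joker) x)"

definition sdist :: "sym list \<Rightarrow> sym list \<Rightarrow> nat" where
  "sdist x y = card {i. i < length x \<and> i < length y \<and>
      ((x ! i = Zero \<and> y ! i = One) \<or> (x ! i = One \<and> y ! i = Zero))}"

definition neighborly :: "nat \<Rightarrow> sym list set \<Rightarrow> bool" where
  "neighborly k F \<longleftrightarrow> (\<forall>x\<in>F. \<forall>y\<in>F. x \<noteq> y \<longrightarrow> 1 \<le> sdist x y \<and> sdist x y \<le> k)"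

definition is_partition :: "nat \<Rightarrow> sym list set \<Rightarrow> bool" where
  "is_partition d F \<longleftrightarrow> F \<subseteq> strings d \<and> (\<exists>k. neighborly k F) \<and>
      (\<Sum>x\<in>F. (2::nat) ^ jokers x) = 2 ^ d"

definition fam_at :: "sym list set \<Rightarrow> nat \<Rightarrow> sym \<Rightarrow> sym list set" where
  "fam_at F i s = {x\<in>F. x ! i = s}"

definition del_at :: "nat \<Rightarrow> sym list \<Rightarrow> sym list" where
  "del_at i v = take i v @ drop (Suc i) v"

definition del_fam :: "nat \<Rightarrow> sym list set \<Rightarrow> sym list set" where
  "del_fam i F = del_at i ` F"

definition is_lamination :: "nat \<Rightarrow> sym list set \<Rightarrow> bool" where
  "is_lamination d F \<longleftrightarrow> is_partition d F \<and>
      (\<exists>i<d. F = fam_at F i Zero \<union> fam_at F i One)"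

inductive total_lamination :: "nat \<Rightarrow> sym list set \<Rightarrow> bool" where
  all_joker: "d \<ge> 1 \<Longrightarrow> total_lamination d {replicate d Joker}"
| full_cube: "d \<ge> 1 \<Longrightarrow> total_lamination d {x. length x = d \<and> set x \<subseteq> {Zero, One}}"
| split: "\<lbrakk>is_lamination d F; i < d; F = fam_at F i Zero \<union> fam_at F i One;
           total_lamination (d - 1) (del_fam i (fam_at F i Zero));
           total_lamination (d - 1) (del_fam i (fam_at F i One))\<rbrakk>
          \<Longrightarrow> total_lamination d F"

end

theory Submission
  imports Defs
begin

(* Sections of a 2-neighborly partition along a coordinate are again 2-neighborly partitions, so
  by induction on d it suffices to find a coordinate at which no piece has a joker, unless F
  consists of the all-joker string alone.  Such a coordinate survives merging a piece x with its
  twin, a piece obtained from x by flipping one non-joker letter; merging keeps F a 2-neighborly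
  partition and makes it smaller.  So everything rests on the fact that a piece x with fewest
  jokers has a twin, proved by induction on d.  If x has a joker, the twin of x in the section
  through that joker lifts back to a twin of x.  If x is a point without twin, the section
  through each coordinate t yields a piece (flip_{M t} x)[t := *], an edge of the cube.  Then M
  is a fixed-point-free injection, 2-neighborliness excludes cycles of M of length at most 4,
  and the joker-free coordinates of the sections show that a joker at u forces a non-joker at
  M u in every piece.  Applied to the piece containing the antipode of x, whose non-jokers all
  clash with x, this gives d <= 4, a contradiction. *)

section \<open>Letters, clashes and cubes\<close>

fun opposite :: "sym \<Rightarrow> sym" where
  "opposite Zero = One" | "opposite One = Zero" | "opposite Joker = Joker"

lemma opposite_opposite [simp]: "opposite (opposite a) = a"
  by (cases a) auto

lemma opposite_eq_Joker_iff [simp]: "opposite a = Joker \<longleftrightarrow> a = Joker"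
  by (cases a) auto

lemma opposite_neq [simp]: "a \<noteq> Joker \<Longrightarrow> opposite a \<noteq> a"
  by (cases a) auto

definition clash :: "sym \<Rightarrow> sym \<Rightarrow> bool" where
  "clash a b \<longleftrightarrow> (a = Zero \<and> b = One) \<or> (a = One \<and> b = Zero)"

lemma clash_iff: "clash a b \<longleftrightarrow> a \<noteq> Joker \<and> b = opposite a"
  by (cases a; cases b) (auto simp: clash_def)

definition conflicts :: "sym list \<Rightarrow> sym list \<Rightarrow> nat set" where
  "conflicts x y = {i. i < length x \<and> i < length y \<and> clash (x ! i) (y ! i)}"

lemma finite_conflicts [simp]: "finite (conflicts x y)"
  unfolding conflicts_def by (rule finite_subset[of _ "{..<length x}"]) auto

lemma conflicts_commute: "conflicts x y = conflicts y x"
  by (auto simp: conflicts_def clash_def)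

lemma sdist_eq_card_conflicts: "sdist x y = card (conflicts x y)"
  by (simp add: sdist_def conflicts_def clash_def)

lemma sdist_commute: "sdist x y = sdist y x"
  by (simp add: sdist_eq_card_conflicts conflicts_commute)

lemma sdist_conv_filter_zip: "sdist x y = length (filter (case_prod clash) (zip x y))"
  unfolding sdist_def length_filter_conv_card
  by (intro arg_cong[where f = card]) (auto simp: clash_def)

lemma jokers_eq_0_iff: "jokers x = 0 \<longleftrightarrow> Joker \<notin> set x"
  by (auto simp: jokers_def filter_empty_conv)

lemma jokers_less_length:
  assumes "x \<noteq> replicate (length x) Joker"
  shows "jokers x < length x"
proof -
  obtain s where "s \<in> set x" "s \<noteq> Joker"
    using assms replicate_length_same[of x Joker] by force
  then show ?thesis
    unfolding jokers_def by (intro length_filter_less) auto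
qed

definition contains :: "sym \<Rightarrow> sym \<Rightarrow> bool" where
  "contains a b \<longleftrightarrow> b \<noteq> Joker \<and> (a \<noteq> Joker \<longrightarrow> b = a)"

definition cube :: "sym list \<Rightarrow> sym list set" where
  "cube x = {p. list_all2 contains x p}"

definition points :: "nat \<Rightarrow> sym list set" where
  "points d = {p. length p = d \<and> Joker \<notin> set p}"

lemma mem_cube_iff:
  "p \<in> cube x \<longleftrightarrow>
     length p = length x \<and> (\<forall>i<length x. p ! i \<noteq> Joker \<and> (x ! i \<noteq> Joker \<longrightarrow> p ! i = x ! i))"
  by (auto simp: cube_def list_all2_conv_all_nth contains_def)

lemma mem_points_iff: "p \<in> points d \<longleftrightarrow> length p = d \<and> (\<forall>i<d. p ! i \<noteq> Joker)"
  by (auto simp: points_def in_set_conv_nth)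

lemma cube_replicate_Joker: "cube (replicate d Joker) = points d"
  by (auto simp: mem_cube_iff mem_points_iff)

lemma cube_subset_points: "length x = d \<Longrightarrow> cube x \<subseteq> points d"
  by (auto simp: mem_cube_iff mem_points_iff)

lemma cube_nonempty: "cube x \<noteq> {}"
proof -
  have "map (\<lambda>s. if s = Joker then Zero else s) x \<in> cube x"
    by (simp add: mem_cube_iff)
  then show ?thesis by blast
qed

lemma cube_Cons: "cube (a # x) = (\<lambda>(b, p). b # p) ` ({b. contains a b} \<times> cube x)"
  by (auto simp: cube_def list_all2_Cons1)

lemma card_contains: "card {b. contains a b} = (if a = Joker then 2 else 1)"
proof -
  have "{b. contains a b} = (if a = Joker then {Zero, One} else {a})"
    by (cases a) (auto simp: contains_def intro: sym.exhaust)
  then show ?thesis by simp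
qed

lemma finite_card_cube: "finite (cube x) \<and> card (cube x) = 2 ^ jokers x"
proof (induction x)
  case Nil
  then show ?case by (simp add: cube_def jokers_def)
next
  case (Cons a x)
  have "finite {b. contains a b}"
    by (rule finite_subset[of _ "{Zero, One}"]) (auto simp: contains_def intro: sym.exhaust)
  moreover have "inj_on (\<lambda>(b, p). b # p) ({b. contains a b} \<times> cube x)"
    by (auto simp: inj_on_def)
  ultimately show ?case
    using Cons by (simp add: cube_Cons card_image card_cartesian_product card_contains jokers_def)
qed

lemma card_points: "card (points d) = 2 ^ d"
  using finite_card_cube[of "replicate d Joker"] by (simp add: cube_replicate_Joker jokers_def)

lemma finite_points: "finite (points d)"
  using finite_card_cube[of "replicate d Joker"] by (simp add: cube_replicate_Joker)

lemma finite_strings: "finite (strings d)"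
proof -
  have "strings d = {xs. set xs \<subseteq> {Zero, One, Joker} \<and> length xs = d}"
    by (auto simp: strings_def intro: sym.exhaust)
  then show ?thesis by (simp add: finite_lists_length_eq)
qed

lemma conflicts_empty_if_common_point: "p \<in> cube x \<Longrightarrow> p \<in> cube y \<Longrightarrow> conflicts x y = {}"
  by (auto simp: mem_cube_iff conflicts_def clash_def)

lemma neighborly_mono: "neighborly k F \<Longrightarrow> k \<le> k' \<Longrightarrow> neighborly k' F"
  by (force simp: neighborly_def)

lemma neighborly_cubes_disjoint:
  "neighborly k F \<Longrightarrow> x \<in> F \<Longrightarrow> y \<in> F \<Longrightarrow> x \<noteq> y \<Longrightarrow> cube x \<inter> cube y = {}"
  using conflicts_empty_if_common_point by (fastforce simp: neighborly_def sdist_eq_card_conflicts)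

section \<open>Two-neighborly partitions\<close>

text \<open>The volume condition of \<^const>\<open>is_partition\<close> is replaced by the covering of all
  points; \<open>partition2_iff\<close> below shows that this is equivalent.\<close>

definition partition2 :: "nat \<Rightarrow> sym list set \<Rightarrow> bool" where
  "partition2 d F \<longleftrightarrow> F \<subseteq> strings d \<and> neighborly 2 F \<and> points d \<subseteq> \<Union> (cube ` F)"

lemma card_Union_cubes:
  assumes "F \<subseteq> strings d" and "neighborly k F"
  shows "card (\<Union> (cube ` F)) = (\<Sum>x\<in>F. 2 ^ jokers x)"
proof -
  have "finite F" using assms(1) finite_strings by (rule finite_subset)
  then have "card (\<Union> (cube ` F)) = (\<Sum>x\<in>F. card (cube x))"
    using finite_card_cube neighborly_cubes_disjoint[OF assms(2)] by (intro card_UN_disjoint) auto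
  then show ?thesis using finite_card_cube by simp
qed

lemma partition2_iff: "partition2 d F \<longleftrightarrow> is_partition d F \<and> neighborly 2 F"
proof -
  have "points d \<subseteq> \<Union> (cube ` F) \<longleftrightarrow> (\<Sum>x\<in>F. 2 ^ jokers x) = card (points d)"
    if "F \<subseteq> strings d" "neighborly 2 F"
  proof -
    have "\<Union> (cube ` F) \<subseteq> points d"
      using that(1) cube_subset_points by (auto simp: strings_def)
    then show ?thesis
      using card_Union_cubes[OF that] finite_points by (metis card_subset_eq subset_antisym)
  qed
  then show ?thesis
    unfolding partition2_def is_partition_def card_points by blast
qed

lemma partition2_length: "partition2 d F \<Longrightarrow> y \<in> F \<Longrightarrow> length y = d"
  by (auto simp: partition2_def strings_def)

lemma partition2_finite: "partition2 d F \<Longrightarrow> finite F"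
  using finite_strings by (auto simp: partition2_def intro: finite_subset)

lemma partition2_sdist:
  "partition2 d F \<Longrightarrow> x \<in> F \<Longrightarrow> y \<in> F \<Longrightarrow> x \<noteq> y \<Longrightarrow> 1 \<le> sdist x y \<and> sdist x y \<le> 2"
  by (auto simp: partition2_def neighborly_def)

lemma partition2_cover:
  assumes "partition2 d F" and "p \<in> points d"
  obtains y where "y \<in> F" and "p \<in> cube y"
  using assms by (auto simp: partition2_def)

lemma partition2_unique:
  "partition2 d F \<Longrightarrow> y \<in> F \<Longrightarrow> y' \<in> F \<Longrightarrow> p \<in> cube y \<Longrightarrow> p \<in> cube y' \<Longrightarrow> y = y'"
  using neighborly_cubes_disjoint by (fastforce simp: partition2_def)

lemma partition2_min_jokers:
  assumes F: "partition2 d F"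
  obtains x where "x \<in> F" and "\<And>y. y \<in> F \<Longrightarrow> jokers x \<le> jokers y"
proof -
  have "replicate d Zero \<in> points d"
    by (simp add: points_def)
  then obtain y0 where "y0 \<in> F"
    using F by (blast elim: partition2_cover)
  then show ?thesis
    using that ex_has_least_nat[of "\<lambda>y. y \<in> F" y0 jokers] by blast
qed

lemma partition2_replicate_Joker:
  assumes F: "partition2 d F" and "replicate d Joker \<in> F"
  shows "F = {replicate d Joker}"
proof -
  have "y = replicate d Joker" if "y \<in> F" for y
  proof -
    obtain p where "p \<in> cube y" using cube_nonempty by blast
    moreover have "p \<in> cube (replicate d Joker)"
      using calculation cube_subset_points partition2_length[OF F that]
      by (auto simp: cube_replicate_Joker)
    ultimately show ?thesis
      using partition2_unique[OF F that assms(2)] by blast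
  qed
  then show ?thesis using assms(2) by blast
qed

lemma partition2_points:
  assumes F: "partition2 d F" and no_jokers: "\<And>y. y \<in> F \<Longrightarrow> jokers y = 0"
  shows "F = points d"
proof
  show "F \<subseteq> points d"
    using no_jokers partition2_length[OF F] by (auto simp: points_def jokers_eq_0_iff)
  show "points d \<subseteq> F"
  proof
    fix p assume "p \<in> points d"
    then obtain y where "y \<in> F" "p \<in> cube y"
      using F by (auto elim: partition2_cover)
    moreover have "p = y"
      using \<open>p \<in> cube y\<close> no_jokers[OF \<open>y \<in> F\<close>]
      by (auto simp: mem_cube_iff jokers_eq_0_iff list_eq_iff_nth_eq in_set_conv_nth)
    ultimately show "p \<in> F" by simp
  qed
qed

section \<open>Sections\<close>

definition skip :: "nat \<Rightarrow> nat \<Rightarrow> nat" where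
  "skip t i = (if i < t then i else Suc i)"

lemma skip_neq [simp]: "skip t i \<noteq> t"
  by (simp add: skip_def)

lemma skip_eq_skip_iff [simp]: "skip t i = skip t j \<longleftrightarrow> i = j"
  by (auto simp: skip_def)

lemma skip_less: "i < d - 1 \<Longrightarrow> t < d \<Longrightarrow> skip t i < d"
  by (auto simp: skip_def)

lemma length_del_at [simp]: "t < length xs \<Longrightarrow> length (del_at t xs) = length xs - 1"
  by (simp add: del_at_def)

lemma nth_del_at: "t < length xs \<Longrightarrow> i < length xs - 1 \<Longrightarrow> del_at t xs ! i = xs ! skip t i"
  by (auto simp: del_at_def skip_def nth_append min_def)

lemma length_filter_take_drop_Suc:
  assumes "t < length xs"
  shows "length (filter P xs) =
    length (filter P (take t xs @ drop (Suc t) xs)) + (if P (xs ! t) then 1 else 0)"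
proof -
  have "xs = take t xs @ xs ! t # drop (Suc t) xs"
    using assms by (rule id_take_nth_drop)
  then have "filter P xs = filter P (take t xs) @ filter P [xs ! t] @ filter P (drop (Suc t) xs)"
    by (metis append.left_neutral append_Cons filter_append)
  then show ?thesis by simp
qed

lemma jokers_del_at:
  "t < length x \<Longrightarrow> jokers x = jokers (del_at t x) + (if x ! t = Joker then 1 else 0)"
  unfolding jokers_def del_at_def by (rule length_filter_take_drop_Suc)

lemma sdist_del_at:
  assumes "length x = length y" and "t < length x" and "\<not> clash (x ! t) (y ! t)"
  shows "sdist (del_at t x) (del_at t y) = sdist x y"
proof -
  have "zip (del_at t x) (del_at t y) = take t (zip x y) @ drop (Suc t) (zip x y)"
    using assms(1) by (simp add: del_at_def take_zip drop_zip)
  then show ?thesis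
    using length_filter_take_drop_Suc[of t "zip x y" "case_prod clash"] assms
    by (simp add: sdist_conv_filter_zip)
qed

lemma eq_update_if_del_at_eq:
  assumes "length y = length z" and "t < length z" and "del_at t y = del_at t z"
  shows "y = z[t := y ! t]"
proof -
  have "take t y = take t z \<and> drop (Suc t) y = drop (Suc t) z"
    using assms by (simp add: del_at_def append_eq_append_conv)
  then show ?thesis
    using assms id_take_nth_drop[of t y] upd_conv_take_nth_drop[of t z] by simp
qed

lemma del_at_mem_cube: "p \<in> cube y \<Longrightarrow> del_at t p \<in> cube (del_at t y)"
  by (simp add: cube_def del_at_def list_all2_appendI)

lemma del_at_insert: "t \<le> length q \<Longrightarrow> del_at t (take t q @ b # drop t q) = q"
  by (simp add: del_at_def)

definition slice :: "nat \<Rightarrow> sym \<Rightarrow> sym list set \<Rightarrow> sym list set" where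
  "slice t b F = del_at t ` {y \<in> F. y ! t \<in> {b, Joker}}"

lemma del_at_mem_slice: "y \<in> F \<Longrightarrow> y ! t \<in> {b, Joker} \<Longrightarrow> del_at t y \<in> slice t b F"
  by (simp add: slice_def)

lemma partition2_slice:
  assumes F: "partition2 d F" and "t < d" and "b \<noteq> Joker"
  shows "partition2 (d - 1) (slice t b F)"
  unfolding partition2_def
proof (intro conjI)
  show "slice t b F \<subseteq> strings (d - 1)"
    using partition2_length[OF F] \<open>t < d\<close> by (auto simp: slice_def strings_def)
  show "neighborly 2 (slice t b F)"
    unfolding neighborly_def
  proof (intro ballI impI)
    fix u v assume "u \<in> slice t b F" "v \<in> slice t b F" "u \<noteq> v"
    then obtain x y where "x \<in> F" "y \<in> F" "x ! t \<in> {b, Joker}" "y ! t \<in> {b, Joker}"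
      and uv: "u = del_at t x" "v = del_at t y"
      by (auto simp: slice_def)
    moreover have "sdist u v = sdist x y"
      using calculation \<open>t < d\<close> partition2_length[OF F] by (auto simp: sdist_del_at clash_def)
    ultimately show "1 \<le> sdist u v \<and> sdist u v \<le> 2"
      using partition2_sdist[OF F] \<open>u \<noteq> v\<close> by metis
  qed
  show "points (d - 1) \<subseteq> \<Union> (cube ` slice t b F)"
  proof
    fix q assume q: "q \<in> points (d - 1)"
    let ?p = "take t q @ b # drop t q"
    have "length q = d - 1" using q by (simp add: points_def)
    then have "?p \<in> points d" and "?p ! t = b"
      using q \<open>t < d\<close> \<open>b \<noteq> Joker\<close>
      by (auto simp: points_def nth_append dest: in_set_takeD in_set_dropD)
    then obtain y where "y \<in> F" "?p \<in> cube y"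
      using F by (auto elim: partition2_cover)
    moreover have "y ! t \<in> {b, Joker}"
      using calculation \<open>?p ! t = b\<close> \<open>t < d\<close> partition2_length[OF F] by (force simp: mem_cube_iff)
    moreover have "q \<in> cube (del_at t y)"
      using del_at_mem_cube[OF \<open>?p \<in> cube y\<close>, of t] \<open>length q = d - 1\<close> \<open>t < d\<close>
      by (simp add: del_at_insert)
    ultimately show "q \<in> \<Union> (cube ` slice t b F)"
      by (auto simp: slice_def)
  qed
qed

section \<open>Flips and twins\<close>

definition flip :: "nat set \<Rightarrow> sym list \<Rightarrow> sym list" where
  "flip S x = map (\<lambda>i. if i \<in> S then opposite (x ! i) else x ! i) [0..<length x]"

lemma length_flip [simp]: "length (flip S x) = length x"
  by (simp add: flip_def)

lemma nth_flip [simp]: "i < length x \<Longrightarrow> flip S x ! i = (if i \<in> S then opposite (x ! i) else x ! i)"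
  by (simp add: flip_def)

lemma jokers_flip [simp]: "jokers (flip S x) = jokers x"
  unfolding jokers_def length_filter_conv_card
  by (intro arg_cong[where f = card]) (auto split: if_splits)

lemma del_at_flip_skip:
  assumes "t < length x"
  shows "del_at t (flip {skip t m} x) = flip {m} (del_at t x)"
proof (rule nth_equalityI)
  fix i assume "i < length (del_at t (flip {skip t m} x))"
  then have "i < length x - 1" using assms by simp
  moreover have "skip t i < length x" using calculation assms by (simp add: skip_less)
  ultimately show "del_at t (flip {skip t m} x) ! i = flip {m} (del_at t x) ! i"
    using assms by (simp add: nth_del_at)
qed (use assms in simp)

lemma conflicts_update_Joker: "conflicts (x[m := Joker]) y = conflicts x y - {m}"
proof (rule set_eqI)
  fix i show "i \<in> conflicts (x[m := Joker]) y \<longleftrightarrow> i \<in> conflicts x y - {m}"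
    by (cases "i = m") (auto simp: conflicts_def clash_def)
qed

lemma partition2_merge_twins:
  assumes F: "partition2 d F" and x: "x \<in> F" "m < d" "x ! m \<noteq> Joker" and twin: "flip {m} x \<in> F"
  shows "partition2 d (insert (x[m := Joker]) (F - {x, flip {m} x}))"
    (is "partition2 d (insert ?z (F - {x, ?x'}))")
  unfolding partition2_def
proof (intro conjI)
  have "length x = d" using partition2_length[OF F x(1)] .
  have z_eq: "?x'[m := Joker] = ?z"
    using \<open>length x = d\<close> \<open>m < d\<close> by (auto simp: list_eq_iff_nth_eq nth_list_update)
  show "insert ?z (F - {x, ?x'}) \<subseteq> strings d"
    using F \<open>length x = d\<close> by (auto simp: partition2_def strings_def)
  have sdist_z: "1 \<le> sdist ?z v \<and> sdist ?z v \<le> 2" if v: "v \<in> F - {x, ?x'}" for v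
  proof -
    have "m \<notin> conflicts x v \<or> m \<notin> conflicts ?x' v"
      using \<open>m < d\<close> \<open>length x = d\<close> by (auto simp: conflicts_def clash_iff)
    then have "conflicts ?z v = conflicts x v \<or> conflicts ?z v = conflicts ?x' v"
      using conflicts_update_Joker[of x m v] conflicts_update_Joker[of ?x' m v] z_eq by auto
    then have "sdist ?z v = sdist x v \<or> sdist ?z v = sdist ?x' v"
      by (auto simp: sdist_eq_card_conflicts)
    then show ?thesis
      using partition2_sdist[OF F] x(1) twin v by (metis DiffD1 DiffD2 insertCI)
  qed
  show "neighborly 2 (insert ?z (F - {x, ?x'}))"
    unfolding neighborly_def
  proof (intro ballI impI)
    fix u v assume "u \<in> insert ?z (F - {x, ?x'})" "v \<in> insert ?z (F - {x, ?x'})" "u \<noteq> v"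
    then show "1 \<le> sdist u v \<and> sdist u v \<le> 2"
      using partition2_sdist[OF F] sdist_z sdist_commute by (metis DiffD1 insertE)
  qed
  have "cube x \<subseteq> cube ?z" and "cube ?x' \<subseteq> cube ?z"
    using \<open>length x = d\<close> \<open>m < d\<close> by (auto simp: mem_cube_iff nth_list_update)
  then show "points d \<subseteq> \<Union> (cube ` insert ?z (F - {x, ?x'}))"
    using F by (fastforce simp: partition2_def)
qed

lemma card_merge_twins_less:
  assumes "finite F" and "x \<in> F" and "x' \<in> F" and "x \<noteq> x'"
  shows "card (insert z (F - {x, x'})) < card F"
proof -
  have "card (F - {x, x'}) = card F - 2"
    using assms by (simp add: card_Diff_subset)
  moreover have "2 \<le> card F"
    using assms card_mono[of F "{x, x'}"] by simp
  moreover have "card (insert z (F - {x, x'})) \<le> Suc (card (F - {x, x'}))"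
    using assms(1) by (simp add: card_insert_if)
  ultimately show ?thesis by linarith
qed

section \<open>From twins to a joker-free coordinate\<close>

definition twin_property :: "nat \<Rightarrow> bool" where
  "twin_property d \<longleftrightarrow> (\<forall>F x. partition2 d F \<longrightarrow> x \<in> F \<longrightarrow> (\<forall>y\<in>F. jokers x \<le> jokers y) \<longrightarrow>
     jokers x < d \<longrightarrow> (\<exists>m<d. x ! m \<noteq> Joker \<and> flip {m} x \<in> F))"

definition lamination_property :: "nat \<Rightarrow> bool" where
  "lamination_property d \<longleftrightarrow> (\<forall>F. partition2 d F \<longrightarrow> F \<noteq> {replicate d Joker} \<longrightarrow>
     (\<exists>c<d. \<forall>y\<in>F. y ! c \<noteq> Joker))"

lemma twin_propertyD:
  assumes "twin_property d" and "partition2 d F" and "x \<in> F"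
    and "\<And>y. y \<in> F \<Longrightarrow> jokers x \<le> jokers y" and "jokers x < d"
  shows "\<exists>m<d. x ! m \<noteq> Joker \<and> flip {m} x \<in> F"
  using assms unfolding twin_property_def by blast

lemma lamination_property_if_twin_property:
  assumes twin: "twin_property d"
  shows "lamination_property d"
  unfolding lamination_property_def
proof (intro allI impI)
  fix F assume "partition2 d F" "F \<noteq> {replicate d Joker}"
  then show "\<exists>c<d. \<forall>y\<in>F. y ! c \<noteq> Joker"
  proof (induction "card F" arbitrary: F rule: less_induct)
    case less
    note F = \<open>partition2 d F\<close>
    have AJ: "replicate d Joker \<notin> F"
      using partition2_replicate_Joker[OF F] less.prems(2) by blast
    obtain x where x: "x \<in> F" "\<And>y. y \<in> F \<Longrightarrow> jokers x \<le> jokers y"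
      using partition2_min_jokers[OF F] by blast
    have "length x = d" using partition2_length[OF F x(1)] .
    moreover have "x \<noteq> replicate d Joker"
      using AJ x(1) by auto
    ultimately have "jokers x < d"
      using jokers_less_length[of x] by simp
    then obtain m where m: "m < d" "x ! m \<noteq> Joker" "flip {m} x \<in> F"
      using twin_propertyD[OF twin F x] by blast
    let ?z = "x[m := Joker]" and ?x' = "flip {m} x"
    let ?G = "insert ?z (F - {x, ?x'})"
    have "?x' ! m \<noteq> x ! m"
      using m \<open>length x = d\<close> by simp
    then have "x \<noteq> ?x'" by auto
    then have "card ?G < card F"
      using card_merge_twins_less[OF partition2_finite[OF F] x(1) m(3)] by blast
    moreover have G: "partition2 d ?G"
      using partition2_merge_twins[OF F x(1) m] .
    show ?case
    proof (cases "?G = {replicate d Joker}")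
      case True
      then have "F \<subseteq> {x, ?x'}" using AJ by blast
      then show ?thesis using m \<open>length x = d\<close> by (intro exI[of _ m]) auto
    next
      case False
      with less.hyps obtain c where c: "c < d" "\<forall>y\<in>?G. y ! c \<noteq> Joker"
        using \<open>card ?G < card F\<close> G by blast
      moreover have "?z ! m = Joker"
        using m(1) \<open>length x = d\<close> by simp
      ultimately have "c \<noteq> m" by auto
      then have "x ! c \<noteq> Joker \<and> ?x' ! c \<noteq> Joker"
        using c \<open>length x = d\<close> by auto
      then show ?thesis using c by blast
    qed
  qed
qed

section \<open>Existence of twins\<close>

lemma twin_of_string_with_joker:
  assumes twin: "twin_property (d - 1)" and F: "partition2 d F"
    and x: "x \<in> F" "\<And>y. y \<in> F \<Longrightarrow> jokers x \<le> jokers y" and "jokers x < d"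
    and t: "t < d" "x ! t = Joker"
  shows "\<exists>m<d. x ! m \<noteq> Joker \<and> flip {m} x \<in> F"
proof -
  let ?S = "slice t Zero F" and ?x' = "del_at t x"
  have "length x = d" using partition2_length[OF F x(1)] .
  have S: "partition2 (d - 1) ?S"
    using partition2_slice[OF F t(1)] by simp
  have jokers_x: "jokers x = Suc (jokers ?x')"
    using jokers_del_at[of t x] t \<open>length x = d\<close> by simp
  have "jokers ?x' \<le> jokers u" if "u \<in> ?S" for u
  proof -
    obtain y where "y \<in> F" "u = del_at t y"
      using \<open>u \<in> ?S\<close> by (auto simp: slice_def)
    then have "jokers y \<le> Suc (jokers u)"
      using jokers_del_at[of t y] t(1) partition2_length[OF F] by simp
    then show ?thesis
      using x(2)[OF \<open>y \<in> F\<close>] jokers_x by simp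
  qed
  moreover have "?x' \<in> ?S"
    using x(1) t(2) by (simp add: del_at_mem_slice)
  moreover have "jokers ?x' < d - 1"
    using jokers_x \<open>jokers x < d\<close> by simp
  ultimately obtain m' where m': "m' < d - 1" "?x' ! m' \<noteq> Joker" "flip {m'} ?x' \<in> ?S"
    using twin_propertyD[OF twin S] by blast
  then obtain y where y: "y \<in> F" "y ! t \<in> {Zero, Joker}" "del_at t y = flip {m'} ?x'"
    by (auto simp: slice_def)
  let ?m = "skip t m'"
  have "y ! t = Joker"
  proof (rule ccontr)
    assume "y ! t \<noteq> Joker"
    then have "jokers y = jokers ?x'"
      using jokers_del_at[of t y] y(3) t(1) partition2_length[OF F y(1)] by simp
    then show False
      using x(2)[OF y(1)] jokers_x by simp
  qed
  moreover have "y = (flip {?m} x)[t := y ! t]"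
    using eq_update_if_del_at_eq[of y "flip {?m} x" t] y(3) del_at_flip_skip[of t x m']
      t(1) \<open>length x = d\<close> partition2_length[OF F y(1)] by simp
  moreover have "flip {?m} x ! t = Joker"
    using t \<open>length x = d\<close> by simp
  ultimately have "y = flip {?m} x"
    by (metis list_update_id)
  moreover have "?m < d" and "x ! ?m \<noteq> Joker"
    using m' t(1) \<open>length x = d\<close> by (simp_all add: skip_less nth_del_at)
  ultimately show ?thesis using y(1) by blast
qed

definition edge :: "sym list \<Rightarrow> nat \<Rightarrow> nat \<Rightarrow> sym list" where
  "edge x t m = (flip {m} x)[t := Joker]"

lemma nth_edge:
  "i < length x \<Longrightarrow> t < length x \<Longrightarrow>
     edge x t m ! i = (if i = t then Joker else if i = m then opposite (x ! i) else x ! i)"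
  by (simp add: edge_def nth_list_update)

lemma twin_or_edge:
  assumes twin: "twin_property (d - 1)" and F: "partition2 d F"
    and x: "x \<in> F" "x \<in> points d" and "2 \<le> d" and t: "t < d"
  shows "\<exists>m<d. m \<noteq> t \<and> (flip {m} x \<in> F \<or> edge x t m \<in> F)"
proof -
  let ?S = "slice t (x ! t) F" and ?x' = "del_at t x"
  have "length x = d" and "x ! t \<noteq> Joker"
    using x(2) t by (simp_all add: mem_points_iff)
  have "jokers x = 0"
    using x(2) by (simp add: points_def jokers_eq_0_iff)
  have S: "partition2 (d - 1) ?S"
    using partition2_slice[OF F t] \<open>x ! t \<noteq> Joker\<close> by simp
  have "jokers ?x' = 0"
    using jokers_del_at[of t x] \<open>jokers x = 0\<close> t \<open>length x = d\<close> by simp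
  moreover have "?x' \<in> ?S"
    using x(1) by (simp add: del_at_mem_slice)
  ultimately obtain m' where m': "m' < d - 1" "flip {m'} ?x' \<in> ?S"
    using twin_propertyD[OF twin S] \<open>2 \<le> d\<close> by fastforce
  then obtain y where y: "y \<in> F" "y ! t \<in> {x ! t, Joker}" "del_at t y = flip {m'} ?x'"
    by (auto simp: slice_def)
  let ?m = "skip t m'"
  have "y = (flip {?m} x)[t := y ! t]"
    using eq_update_if_del_at_eq[of y "flip {?m} x" t] y(3) del_at_flip_skip[of t x m']
      t \<open>length x = d\<close> partition2_length[OF F y(1)] by simp
  moreover have "flip {?m} x ! t = x ! t"
    using t \<open>length x = d\<close> skip_neq[of t m'] by (simp del: skip_neq)
  ultimately have "y = flip {?m} x \<or> y = edge x t ?m"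
    using y(2) by (metis edge_def insert_iff list_update_id singletonD)
  then show ?thesis
    using y(1) m'(1) t by (intro exI[of _ ?m]) (auto simp: skip_less)
qed

lemma section_coordinate:
  assumes lamination: "lamination_property (d - 1)" and F: "partition2 d F"
    and x: "x \<in> F" "x \<in> points d" and "2 \<le> d" and t: "t < d"
  shows "\<exists>c<d. c \<noteq> t \<and> (\<forall>y\<in>F. y ! t \<in> {x ! t, Joker} \<longrightarrow> y ! c \<noteq> Joker)"
proof -
  let ?S = "slice t (x ! t) F" and ?x' = "del_at t x"
  have "length x = d" and "x ! t \<noteq> Joker"
    using x(2) t by (simp_all add: mem_points_iff)
  have "jokers x = 0"
    using x(2) by (simp add: points_def jokers_eq_0_iff)
  have S: "partition2 (d - 1) ?S"
    using partition2_slice[OF F t] \<open>x ! t \<noteq> Joker\<close> by simp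
  have "jokers ?x' = 0"
    using jokers_del_at[of t x] \<open>jokers x = 0\<close> t \<open>length x = d\<close> by simp
  then have "?x' \<noteq> replicate (d - 1) Joker"
    using \<open>2 \<le> d\<close> by (auto simp: jokers_def)
  moreover have "?x' \<in> ?S"
    using x(1) by (simp add: del_at_mem_slice)
  ultimately obtain c' where c': "c' < d - 1" "\<forall>u\<in>?S. u ! c' \<noteq> Joker"
    using lamination S unfolding lamination_property_def by blast
  have "y ! skip t c' \<noteq> Joker" if "y \<in> F" "y ! t \<in> {x ! t, Joker}" for y
  proof -
    have "del_at t y ! c' \<noteq> Joker"
      using c'(2) del_at_mem_slice[OF that] by blast
    then show ?thesis
      using nth_del_at[of t y c'] c'(1) t partition2_length[OF F that(1)] by simp
  qed
  then show ?thesis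
    using c'(1) t by (intro exI[of _ "skip t c'"]) (auto simp: skip_less)
qed

lemma flip_mem_points: "x \<in> points d \<Longrightarrow> flip S x \<in> points d"
  by (auto simp: mem_points_iff)

lemma flip_mem_cube_iff:
  assumes "x \<in> points d" and "length y = d"
  shows "flip S x \<in> cube y \<longleftrightarrow>
    (\<forall>i<d. y ! i \<noteq> Joker \<longrightarrow> y ! i = (if i \<in> S then opposite (x ! i) else x ! i))"
  using assms by (auto simp: mem_cube_iff mem_points_iff)

lemma flip_mem_cube_cong:
  assumes "x \<in> points d" and "flip S x \<in> cube y"
    and "\<And>i. i < d \<Longrightarrow> y ! i \<noteq> Joker \<Longrightarrow> i \<in> S \<longleftrightarrow> i \<in> S'"
  shows "flip S' x \<in> cube y"
proof -
  have "length y = d"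
    using assms(1,2) by (simp add: mem_cube_iff mem_points_iff)
  then show ?thesis
    using assms(2,3) by (auto simp: flip_mem_cube_iff[OF assms(1)])
qed

lemma flip_mem_cube_edge:
  assumes "x \<in> points d" and "t < d" and "m < d" and "t \<noteq> m"
  shows "flip S x \<in> cube (edge x t m) \<longleftrightarrow> (\<forall>i<d. i \<noteq> t \<longrightarrow> (i \<in> S \<longleftrightarrow> i = m))"
proof -
  have x_nth: "x ! i \<noteq> Joker \<and> x ! i \<noteq> opposite (x ! i)" if "i < d" for i
    using assms(1) that by (metis mem_points_iff opposite_neq)
  have "length (edge x t m) = d"
    using assms(1) by (simp add: edge_def mem_points_iff)
  then show ?thesis
    using assms(1-4) x_nth by (auto simp: flip_mem_cube_iff[OF assms(1)] nth_edge mem_points_iff)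
qed

lemma piece_of_flip:
  assumes "partition2 d F" and "x \<in> points d"
  obtains R where "R \<in> F" and "flip S x \<in> cube R"
  using partition2_cover[OF assms(1) flip_mem_points[OF assms(2)]] by blast

lemma edge_eq_if_same_flip:
  assumes F: "partition2 d F" and x: "x \<in> points d"
    and "edge x t m \<in> F" "edge x t' m \<in> F" "t < d" "t' < d" "m < d" "t \<noteq> m" "t' \<noteq> m"
  shows "t = t'"
proof -
  have "length x = d" using x by (simp add: mem_points_iff)
  have "flip {m} x \<in> cube (edge x t m)" "flip {m} x \<in> cube (edge x t' m)"
    using assms(5-9) x by (auto simp: flip_mem_cube_edge)
  then have "edge x t m = edge x t' m"
    using partition2_unique[OF F assms(3,4)] by blast
  moreover have "edge x t m ! t = Joker"
    using assms(5) \<open>length x = d\<close> by (simp add: nth_edge)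
  ultimately have "edge x t' m ! t = Joker"
    by simp
  then show ?thesis
    using assms(5,6,8) \<open>length x = d\<close> x by (auto simp: nth_edge mem_points_iff split: if_splits)
qed

lemma no_edge_2cycle:
  assumes F: "partition2 d F" and x: "x \<in> points d" and "a < d" "b < d" "a \<noteq> b"
  shows "\<not> (edge x a b \<in> F \<and> edge x b a \<in> F)"
proof
  assume edges: "edge x a b \<in> F \<and> edge x b a \<in> F"
  have "flip {a, b} x \<in> cube (edge x a b)" "flip {a, b} x \<in> cube (edge x b a)"
    using assms(3-5) x by (auto simp: flip_mem_cube_edge)
  then have "edge x a b = edge x b a"
    using partition2_unique[OF F] edges by blast
  moreover have "edge x a b ! a = Joker" "edge x b a ! a \<noteq> Joker"
    using assms(3-5) x by (simp_all add: nth_edge mem_points_iff)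
  ultimately show False by simp
qed

lemma edge_path_piece:
  assumes F: "partition2 d F" and x: "x \<in> F" "x \<in> points d"
    and "u < d" "v < d" "s < d" "distinct [u, v, s]"
    and edges: "edge x u v \<in> F" "edge x v s \<in> F" and R: "R \<in> F" "flip {u, v, s} x \<in> cube R"
  shows "R ! u \<noteq> Joker" and "R ! s \<noteq> Joker" and "R ! v = Joker"
proof -
  have "length x = d" and x_nth: "\<And>i. i < d \<Longrightarrow> x ! i \<noteq> Joker"
    using x(2) by (simp_all add: mem_points_iff)
  have "length R = d"
    using partition2_length[OF F R(1)] .
  then have R_nth: "R ! i = (if i \<in> {u, v, s} then opposite (x ! i) else x ! i)"
    if "i < d" "R ! i \<noteq> Joker" for i
    using R(2) that x(2) by (simp add: flip_mem_cube_iff)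
  show Ru: "R ! u \<noteq> Joker"
  proof
    assume "R ! u = Joker"
    then have "flip {v, s} x \<in> cube R"
      using assms(7) by (intro flip_mem_cube_cong[OF x(2) R(2)]) auto
    moreover have "flip {v, s} x \<in> cube (edge x v s)"
      using assms(5-7) x(2) by (auto simp: flip_mem_cube_edge)
    ultimately have "R = edge x v s"
      using partition2_unique[OF F R(1) edges(2)] by blast
    then show False
      using \<open>R ! u = Joker\<close> assms(4-7) x_nth \<open>length x = d\<close> by (simp add: nth_edge)
  qed
  show Rs: "R ! s \<noteq> Joker"
  proof
    assume "R ! s = Joker"
    then have "flip {u, v} x \<in> cube R"
      using assms(7) by (intro flip_mem_cube_cong[OF x(2) R(2)]) auto
    moreover have "flip {u, v} x \<in> cube (edge x u v)"
      using assms(4,5,7) x(2) by (auto simp: flip_mem_cube_edge)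
    ultimately have "R = edge x u v"
      using partition2_unique[OF F R(1) edges(1)] by blast
    then show False
      using \<open>R ! s = Joker\<close> assms(4-7) x_nth \<open>length x = d\<close> by (simp add: nth_edge)
  qed
  show "R ! v = Joker"
  proof (rule ccontr)
    \<comment> \<open>otherwise R clashes with x at u, v and s\<close>
    assume "R ! v \<noteq> Joker"
    then have opp: "R ! i = opposite (x ! i)" if "i \<in> {u, v, s}" for i
      using R_nth[of i] Ru Rs that assms(4-6) by auto
    then have "{u, v, s} \<subseteq> conflicts x R"
      using assms(4-6) x_nth \<open>length x = d\<close> \<open>length R = d\<close> by (auto simp: conflicts_def clash_iff)
    moreover have "card {u, v, s} = 3"
      using assms(7) by simp
    ultimately have "3 \<le> sdist x R"
      unfolding sdist_eq_card_conflicts by (metis card_mono finite_conflicts)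
    moreover have "R \<noteq> x"
      using opp[of u] x_nth[of u] assms(4) by (metis insertCI opposite_neq)
    ultimately show False
      using partition2_sdist[OF F x(1) R(1)] by simp
  qed
qed

lemma no_edge_3cycle:
  assumes F: "partition2 d F" and x: "x \<in> F" "x \<in> points d"
    and "u < d" "v < d" "s < d" "distinct [u, v, s]"
  shows "\<not> (edge x u v \<in> F \<and> edge x v s \<in> F \<and> edge x s u \<in> F)"
proof
  assume edges: "edge x u v \<in> F \<and> edge x v s \<in> F \<and> edge x s u \<in> F"
  obtain R where R: "R \<in> F" "flip {u, v, s} x \<in> cube R"
    using piece_of_flip[OF F x(2)] .
  have "R ! v = Joker" and "R ! s \<noteq> Joker"
    using edge_path_piece[OF F x assms(4-7) _ _ R] edges by blast+
  then have "flip {u, s} x \<in> cube R"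
    using assms(7) by (intro flip_mem_cube_cong[OF x(2) R(2)]) auto
  moreover have "flip {u, s} x \<in> cube (edge x s u)"
    using assms(4-7) x(2) by (auto simp: flip_mem_cube_edge)
  ultimately have "R = edge x s u"
    using partition2_unique[OF F R(1)] edges by blast
  then show False
    using \<open>R ! s \<noteq> Joker\<close> assms(6) x(2) by (simp add: nth_edge mem_points_iff)
qed

lemma no_edge_4cycle:
  assumes F: "partition2 d F" and x: "x \<in> F" "x \<in> points d"
    and "u0 < d" "u1 < d" "u2 < d" "u3 < d" "distinct [u0, u1, u2, u3]"
  shows "\<not> (edge x u0 u1 \<in> F \<and> edge x u1 u2 \<in> F \<and> edge x u2 u3 \<in> F \<and> edge x u3 u0 \<in> F)"
proof
  assume edges: "edge x u0 u1 \<in> F \<and> edge x u1 u2 \<in> F \<and> edge x u2 u3 \<in> F \<and> edge x u3 u0 \<in> F"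
  obtain R0 where R0: "R0 \<in> F" "flip {u0, u1, u2} x \<in> cube R0"
    using piece_of_flip[OF F x(2)] .
  obtain R1 where R1: "R1 \<in> F" "flip {u1, u2, u3} x \<in> cube R1"
    using piece_of_flip[OF F x(2)] .
  obtain R2 where R2: "R2 \<in> F" "flip {u2, u3, u0} x \<in> cube R2"
    using piece_of_flip[OF F x(2)] .
  obtain R3 where R3: "R3 \<in> F" "flip {u3, u0, u1} x \<in> cube R3"
    using piece_of_flip[OF F x(2)] .
  have "R0 ! u1 = Joker"
    using edge_path_piece[OF F x, of u0 u1 u2, OF _ _ _ _ _ _ R0] assms edges by simp
  have "R1 ! u1 \<noteq> Joker" "R1 ! u2 = Joker"
    using edge_path_piece[OF F x, of u1 u2 u3, OF _ _ _ _ _ _ R1] assms edges by simp_all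
  have "R2 ! u3 = Joker"
    using edge_path_piece[OF F x, of u2 u3 u0, OF _ _ _ _ _ _ R2] assms edges by simp
  have "R3 ! u0 = Joker"
    using edge_path_piece[OF F x, of u3 u0 u1, OF _ _ _ _ _ _ R3] assms edges by simp
  have "flip {u0, u2} x \<in> cube R0" "flip {u0, u2} x \<in> cube R2"
    using assms(8) \<open>R0 ! u1 = Joker\<close> \<open>R2 ! u3 = Joker\<close>
    by (auto intro: flip_mem_cube_cong[OF x(2) R0(2)] flip_mem_cube_cong[OF x(2) R2(2)])
  then have "R0 = R2"
    using partition2_unique[OF F R0(1) R2(1)] by blast
  have "flip {u1, u3} x \<in> cube R1" "flip {u1, u3} x \<in> cube R3"
    using assms(8) \<open>R1 ! u2 = Joker\<close> \<open>R3 ! u0 = Joker\<close>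
    by (auto intro: flip_mem_cube_cong[OF x(2) R1(2)] flip_mem_cube_cong[OF x(2) R3(2)])
  then have "R1 = R3"
    using partition2_unique[OF F R1(1) R3(1)] by blast
  have "flip {u0, u1, u2, u3} x \<in> cube R0"
    using \<open>R2 ! u3 = Joker\<close> \<open>R0 = R2\<close> by (intro flip_mem_cube_cong[OF x(2) R0(2)]) auto
  moreover have "flip {u0, u1, u2, u3} x \<in> cube R1"
    using \<open>R3 ! u0 = Joker\<close> \<open>R1 = R3\<close> by (intro flip_mem_cube_cong[OF x(2) R1(2)]) auto
  ultimately have "R0 = R1"
    using partition2_unique[OF F R0(1) R1(1)] by blast
  then show False
    using \<open>R0 ! u1 = Joker\<close> \<open>R1 ! u1 \<noteq> Joker\<close> by simp
qed

lemma funpow_cycle_le_card: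
  assumes "finite A" and "M ` A \<subseteq> A" and "inj_on M A" and "u \<in> A"
  shows "\<exists>k\<in>{1..card A}. (M ^^ k) u = u"
proof -
  have orbit: "(M ^^ k) u \<in> A" for k
    by (induction k) (use assms in auto)
  have cancel: "(M ^^ (b - a)) u = u" if "(M ^^ a) u = (M ^^ b) u" "a \<le> b" for a b
    using that
  proof (induction a arbitrary: b)
    case (Suc a)
    then obtain b' where "b = Suc b'" by (cases b) auto
    then have "(M ^^ a) u = (M ^^ b') u"
      using Suc.prems(1) inj_onD[OF assms(3)] orbit by simp
    then show ?case using Suc.IH \<open>b = Suc b'\<close> Suc.prems(2) by simp
  qed simp
  have "\<not> inj_on (\<lambda>k. (M ^^ k) u) {0..card A}"
  proof
    assume "inj_on (\<lambda>k. (M ^^ k) u) {0..card A}"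
    then have "card {0..card A} \<le> card A"
      using card_inj_on_le[OF _ _ assms(1)] orbit by blast
    then show False by simp
  qed
  then obtain a b where "a < b" "b \<le> card A" "(M ^^ a) u = (M ^^ b) u"
    unfolding inj_on_def by (metis atLeastAtMost_iff linorder_neqE_nat)
  then show ?thesis
    using cancel[of a b] by (intro bexI[of _ "b - a"]) auto
qed

lemma dim_le_4_if_jokers_force_non_jokers:
  assumes F: "partition2 d F" and x: "x \<in> F" "x \<in> points d"
    and M: "M ` {..<d} \<subseteq> {..<d}" "inj_on M {..<d}"
    and forced: "\<And>y u. y \<in> F \<Longrightarrow> u < d \<Longrightarrow> y ! u = Joker \<Longrightarrow> y ! M u \<noteq> Joker"
  shows "d \<le> 4"
proof (cases "d = 0")
  case False
  have "length x = d" and x_nth: "\<And>i. i < d \<Longrightarrow> x ! i \<noteq> Joker"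
    using x(2) by (simp_all add: mem_points_iff)
  obtain w where w: "w \<in> F" "flip {..<d} x \<in> cube w"
    using piece_of_flip[OF F x(2)] .
  have "length w = d" using partition2_length[OF F w(1)] .
  define D where "D = {i. i < d \<and> w ! i \<noteq> Joker}"
  define J where "J = {i. i < d \<and> w ! i = Joker}"
  have w_nth: "w ! i = opposite (x ! i)" if "i \<in> D" for i
    using w(2) that x(2) \<open>length w = d\<close> by (simp add: D_def flip_mem_cube_iff)
  then have "D \<subseteq> conflicts x w"
    using x_nth \<open>length x = d\<close> \<open>length w = d\<close> by (auto simp: D_def conflicts_def clash_iff)
  moreover have "w ! 0 \<noteq> x ! 0"
    using w_nth[of 0] x_nth[of 0] \<open>d \<noteq> 0\<close> by (cases "w ! 0 = Joker") (auto simp: D_def)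
  then have "sdist x w \<le> 2"
    using partition2_sdist[OF F x(1) w(1)] by auto
  ultimately have "card D \<le> 2"
    unfolding sdist_eq_card_conflicts by (meson card_mono finite_conflicts order_trans)
  moreover have "card J \<le> card D"
  proof (rule card_inj_on_le)
    show "inj_on M J" using M(2) by (rule inj_on_subset) (auto simp: J_def)
    show "M ` J \<subseteq> D" using M(1) forced[OF w(1)] by (auto simp: J_def D_def)
  qed (simp add: D_def)
  moreover have "card J + card D = d"
  proof -
    have "J \<union> D = {..<d}" "J \<inter> D = {}" by (auto simp: J_def D_def)
    then show ?thesis by (metis card_Un_disjoint card_lessThan finite_Un finite_lessThan)
  qed
  ultimately show ?thesis by linarith
qed simp

lemma twin_of_point_dim1:
  assumes F: "partition2 1 F" and x: "x \<in> F" "x \<in> points 1"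
  shows "flip {0} x \<in> F"
proof -
  obtain y where y: "y \<in> F" "flip {0} x \<in> cube y"
    using piece_of_flip[OF F x(2)] .
  have "length x = 1" and "x ! 0 \<noteq> Joker"
    using x(2) by (simp_all add: mem_points_iff)
  have "length y = 1" using partition2_length[OF F y(1)] .
  have "y ! 0 \<noteq> Joker"
  proof
    assume "y ! 0 = Joker"
    then have "flip {} x \<in> cube y" "flip {} x \<in> cube x"
      using \<open>length x = 1\<close> \<open>length y = 1\<close>
      by (auto intro: flip_mem_cube_cong[OF x(2) y(2)] simp: flip_mem_cube_iff[OF x(2)])
    then have "y = x"
      using partition2_unique[OF F y(1) x(1)] by blast
    then show False
      using \<open>y ! 0 = Joker\<close> \<open>x ! 0 \<noteq> Joker\<close> by simp
  qed
  then have "y = flip {0} x"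
    using y(2) \<open>length x = 1\<close> \<open>length y = 1\<close>
    by (auto simp: flip_mem_cube_iff[OF x(2)] list_eq_iff_nth_eq)
  then show ?thesis
    using y(1) by simp
qed

lemma eq_flip_if_edge_in_section:
  assumes x: "x \<in> points d" and "t < d" "c < d" "t \<noteq> c" "c \<noteq> m"
    and "edge x c m \<in> F" and free: "\<forall>y\<in>F. y ! t \<in> {x ! t, Joker} \<longrightarrow> y ! c \<noteq> Joker"
  shows "t = m"
proof -
  have "length x = d" using x by (simp add: mem_points_iff)
  then have "edge x c m ! c = Joker"
    using assms(3) by (simp add: nth_edge)
  then have "edge x c m ! t \<notin> {x ! t, Joker}"
    using free assms(6) by blast
  then show ?thesis
    using assms(2-4) \<open>length x = d\<close> by (auto simp: nth_edge split: if_splits)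
qed

lemma twin_of_point:
  assumes twin: "twin_property (d - 1)" and lamination: "lamination_property (d - 1)"
    and F: "partition2 d F" and x: "x \<in> F" "x \<in> points d" and "2 \<le> d"
  shows "\<exists>m<d. x ! m \<noteq> Joker \<and> flip {m} x \<in> F"
proof (rule ccontr)
  assume no_twin': "\<not> ?thesis"
  have "flip {m} x \<notin> F" if "m < d" for m
    using no_twin' that x(2) by (auto simp: mem_points_iff)
  then have "\<forall>t\<in>{..<d}. \<exists>m. m < d \<and> m \<noteq> t \<and> edge x t m \<in> F"
    using twin_or_edge[OF twin F x \<open>2 \<le> d\<close>] by blast
  then obtain M where M: "M t < d" "M t \<noteq> t" "edge x t (M t) \<in> F" if "t < d" for t
    by (metis bchoice lessThan_iff)
  have M_range: "M ` {..<d} \<subseteq> {..<d}"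
    using M(1) by auto
  have M_inj: "inj_on M {..<d}"
    using edge_eq_if_same_flip[OF F x(2)] M by (intro inj_onI) (metis lessThan_iff)
  have forced: "y ! M u \<noteq> Joker" if "y \<in> F" "u < d" "y ! u = Joker" for y u
  proof -
    obtain c where c: "c < d" "c \<noteq> M u" "\<forall>y\<in>F. y ! M u \<in> {x ! M u, Joker} \<longrightarrow> y ! c \<noteq> Joker"
      using section_coordinate[OF lamination F x \<open>2 \<le> d\<close>] M(1)[OF \<open>u < d\<close>] by blast
    then have "M u = M c"
      using eq_flip_if_edge_in_section[OF x(2)] M[OF c(1)] M(1)[OF \<open>u < d\<close>] by metis
    then have "c = u"
      using inj_onD[OF M_inj] c(1) \<open>u < d\<close> by simp
    then show ?thesis
      using c(3) that by auto
  qed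
  have "d \<le> 4"
    using dim_le_4_if_jokers_force_non_jokers[OF F x M_range M_inj forced] .
  have no_2cycle: "M (M t) \<noteq> t" if "t < d" for t
    using no_edge_2cycle[OF F x(2), of t "M t"] M that by metis
  have no_3cycle: "M (M (M t)) \<noteq> t" if "t < d" for t
  proof
    assume "M (M (M t)) = t"
    then have "edge x (M (M t)) t \<in> F"
      using M(1,3) that by metis
    then show False
      using no_edge_3cycle[OF F x, of t "M t" "M (M t)"] that M(1,2)[of t] M(1,2)[of "M t"]
        M(3)[of t] M(3)[of "M t"] no_2cycle[OF that] by fastforce
  qed
  have no_4cycle: "M (M (M (M t))) \<noteq> t" if "t < d" for t
  proof
    assume "M (M (M (M t))) = t"
    then have "edge x (M (M (M t))) t \<in> F"
      using M(1,3) that by metis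
    then show False
      using no_edge_4cycle[OF F x, of t "M t" "M (M t)" "M (M (M t))"] that
        M(1,2)[of t] M(1,2)[of "M t"] M(1,2)[of "M (M t)"] M(3)[of t] M(3)[of "M t"]
        M(3)[of "M (M t)"] no_2cycle[of t] no_2cycle[of "M t"] no_3cycle[OF that] by fastforce
  qed
  obtain k where "k \<in> {1..d}" "(M ^^ k) 0 = 0"
    using funpow_cycle_le_card[of "{..<d}" M 0] M_range M_inj \<open>2 \<le> d\<close> by auto
  then show False
    using \<open>d \<le> 4\<close> M(2) no_2cycle no_3cycle no_4cycle \<open>2 \<le> d\<close>
    by (auto simp: eval_nat_numeral le_Suc_eq)
qed

lemma twin_property_all: "twin_property d"
proof (induction d rule: less_induct)
  case (less d)
  show ?case
    unfolding twin_property_def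
  proof (intro allI impI)
    fix F x assume F: "partition2 d F" and x: "x \<in> F" "\<forall>y\<in>F. jokers x \<le> jokers y"
      and "jokers x < d"
    show "\<exists>m<d. x ! m \<noteq> Joker \<and> flip {m} x \<in> F"
    proof (cases "jokers x = 0")
      case True
      then have x_point: "x \<in> points d"
        using partition2_length[OF F x(1)] by (simp add: points_def jokers_eq_0_iff)
      show ?thesis
      proof (cases "d = 1")
        case True
        then show ?thesis
          using twin_of_point_dim1[of F x] F x(1) x_point by (auto simp: mem_points_iff)
      next
        case False
        then show ?thesis
          using twin_of_point[OF _ _ F x(1) x_point] less lamination_property_if_twin_property
            \<open>jokers x < d\<close> by simp
      qed
    next
      case False
      then obtain t where "t < d" "x ! t = Joker"
        using partition2_length[OF F x(1)] by (metis in_set_conv_nth jokers_eq_0_iff)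
      then show ?thesis
        using twin_of_string_with_joker[OF _ F x(1)] less x(2) \<open>jokers x < d\<close> by simp
    qed
  qed
qed

section \<open>Total laminations\<close>

lemma total_lamination_if_partition2:
  "1 \<le> d \<Longrightarrow> partition2 d F \<Longrightarrow> total_lamination d F"
proof (induction d arbitrary: F)
  case 0
  then show ?case by simp
next
  case (Suc n)
  note F = \<open>partition2 (Suc n) F\<close>
  show ?case
  proof (cases "F = {replicate (Suc n) Joker}")
    case True
    then show ?thesis using total_lamination.all_joker[of "Suc n"] by simp
  next
    case False
    then obtain c where c: "c < Suc n" "\<forall>y\<in>F. y ! c \<noteq> Joker"
      using lamination_property_if_twin_property[OF twin_property_all] F
      unfolding lamination_property_def by blast
    show ?thesis
    proof (cases "n = 0")
      case True
      then have "F = points (Suc n)"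
        using partition2_points[OF F] c partition2_length[OF F]
        by (auto simp: jokers_eq_0_iff in_set_conv_nth)
      moreover have "points (Suc n) = {x. length x = Suc n \<and> set x \<subseteq> {Zero, One}}"
        by (auto simp: points_def intro: sym.exhaust)
      ultimately show ?thesis using total_lamination.full_cube by simp
    next
      case False
      have split: "F = fam_at F c Zero \<union> fam_at F c One"
        using c(2) by (auto simp: fam_at_def intro: sym.exhaust)
      have "is_lamination (Suc n) F"
        unfolding is_lamination_def using F split c(1) by (auto simp: partition2_iff)
      moreover have "total_lamination n (del_fam c (fam_at F c b))" if "b \<noteq> Joker" for b
      proof -
        have "del_fam c (fam_at F c b) = slice c b F"
          using c(2) by (auto simp: del_fam_def fam_at_def slice_def)
        then show ?thesis
          using Suc.IH partition2_slice[OF F c(1) that] False by simp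
      qed
      ultimately show ?thesis
        using total_lamination.split[OF _ c(1) split] by simp
    qed
  qed
qed

theorem corollary3:
  fixes d k :: nat and F :: "sym list set"
  assumes "d \<ge> 1"
    and "is_partition d F"
    and "k \<le> 2"
    and "neighborly k F"
  shows "total_lamination d F"
proof -
  have "neighborly 2 F"
    using assms(4,3) by (rule neighborly_mono)
  then have "partition2 d F"
    using assms(2) by (simp add: partition2_iff)
  then show ?thesis
    by (rule total_lamination_if_partition2[OF assms(1)])
qed

end
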